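(* Let $\mathbf B_n$ be the $n$-th Bell number. Then $\lim_{n\to\infty}\mathbf B_n/\alpha_n(1\text{-}23\text{-}4)=0$.
   Context: A permutation $\pi=\pi_1\cdots\pi_n$ of $\{1,\dots,n\}$ contains the generalized pattern $1\text{-}23\text{-}4$ if there are indices $a<b<b+1<c$ with $\pi_a<\pi_b<\pi_{b+1}<\pi_c$; otherwise it avoids it. $\alpha_n(1\text{-}23\text{-}4)$ is the number of permutations of $\{1,\dots,n\}$ avoiding it. The Bell number $\mathbf B_n$ is the number of set partitions of an $n$-element set. *)

theory Defs
  imports "HOL-Analysis.Analysis" "HOL-Library.Disjoint_Sets" "HOL-Combinatorics.Multiset_Permutations"
begin

definition bell :: "nat \<Rightarrow> nat" where
  "bell n = card {P. partition_on {1..n} P}"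

definition contains_1_23_4 :: "nat list \<Rightarrow> bool" where
  "contains_1_23_4 p \<longleftrightarrow> (\<exists>a b c. a < b \<and> b + 1 < c \<and> c < length p \<and>
      p ! a < p ! b \<and> p ! b < p ! (b + 1) \<and> p ! (b + 1) < p ! c)"

definition alpha_1_23_4 :: "nat \<Rightarrow> nat" where
  "alpha_1_23_4 n = card {p \<in> permutations_of_set {1..n}. \<not> contains_1_23_4 p}"

end

theory Submission
  imports Defs
begin

(* Encode a partition of {1..n} by the map sending each element to the least element of its
   block. Adding n + 1 either opens a new block or joins an existing one, so
   B(n+1) <= sum over partitions P of {1..n} of (blocks(P) + 1).
   Conversely, listing the blocks of P by decreasing minimum, each minimum followed by the rest
   of its block in decreasing order, gives a permutation of {1..n} with no 1-23 pattern;
   inserting n + 1 at any of the n + 1 positions then gives distinct 1-23-4 avoiders, so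
   alpha(n+1) >= (n+1) B(n).
   Finally, at most 2^n n^(n-2q) maps have 2q or more blocks while at least q^(n-q) maps exist;
   for q ~ n/s and n >= (4s)^s the former are a 2^-n fraction, so the average number of blocks
   is O(n/s) and B(n+1) / alpha(n+1) = O(1/s + 1/n). *)

definition rep_map :: "'a::linorder set \<Rightarrow> ('a \<Rightarrow> 'a) \<Rightarrow> bool" where
  "rep_map A g \<longleftrightarrow> (\<forall>x\<in>A. g x \<in> A \<and> g x \<le> x \<and> g (g x) = g x)"

definition rep_maps :: "'a::linorder set \<Rightarrow> ('a \<Rightarrow> 'a) set" where
  "rep_maps A = {g \<in> extensional A. rep_map A g}"

definition reps :: "'a set \<Rightarrow> ('a \<Rightarrow> 'a) \<Rightarrow> 'a set" where
  "reps A g = {x \<in> A. g x = x}"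

lemma rep_maps_subset_PiE: "rep_maps A \<subseteq> A \<rightarrow>\<^sub>E A"
  by (auto simp: rep_maps_def rep_map_def PiE_iff extensional_def)

lemma finite_rep_maps: "finite A \<Longrightarrow> finite (rep_maps A)"
  by (rule finite_subset[OF rep_maps_subset_PiE]) (simp add: finite_PiE)

lemma rep_map_mono:
  assumes "rep_map (insert a A) g" "\<forall>y\<in>A. y < a"
  shows "rep_map A g"
  using assms unfolding rep_map_def by (metis insert_iff le_less_trans less_irrefl)

definition block_min :: "'a::linorder set set \<Rightarrow> 'a \<Rightarrow> 'a" where
  "block_min P x = Min {y. \<exists>p\<in>P. x \<in> p \<and> y \<in> p}"

lemma block_min_eq:
  assumes P: "partition_on A P" and "finite A" "p \<in> P" "x \<in> p"
  shows "block_min P x = Min p" "Min p \<in> p" "Min p \<le> x"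
proof -
  have "{y. \<exists>q\<in>P. x \<in> q \<and> y \<in> q} = p"
    using assms partition_onD2[OF P] by (auto simp: disjoint_def)
  then show "block_min P x = Min p" by (simp add: block_min_def)
  have "finite p"
    using assms partition_onD1[OF P] by (meson Union_upper finite_subset)
  then show "Min p \<in> p" "Min p \<le> x" using Min_in assms(4) by auto
qed

lemma restrict_block_min_in_rep_maps:
  assumes "partition_on A P" "finite A"
  shows "restrict (block_min P) A \<in> rep_maps A"
proof -
  have "block_min P x \<in> A \<and> block_min P x \<le> x \<and> block_min P (block_min P x) = block_min P x"
    if "x \<in> A" for x
  proof -
    have "x \<in> \<Union>P" using that partition_onD1[OF assms(1)] by simp
    then obtain p where p: "p \<in> P" "x \<in> p" by blast
    then show ?thesis
      using block_min_eq[OF assms p] block_min_eq[OF assms p(1)] p partition_onD1[OF assms(1)]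
      by auto
  qed
  then show ?thesis by (auto simp: rep_maps_def rep_map_def)
qed

text \<open>Distinct blocks have distinct minima, so a partition is recovered from its block minima.\<close>
lemma partition_eq_fibres_block_min:
  assumes P: "partition_on A P" and "finite A"
  shows "P = (\<lambda>x. {y\<in>A. block_min P y = block_min P x}) ` A"
proof -
  have "{y\<in>A. block_min P y = block_min P x} = p" if "p \<in> P" "x \<in> p" for p x
  proof -
    have "y \<in> p" if "q \<in> P" "y \<in> q" "Min q = Min p" for q y
      using that block_min_eq(2)[OF assms] \<open>p \<in> P\<close> \<open>x \<in> p\<close> partition_onD2[OF P]
      by (metis disjointD disjoint_iff)
    then show ?thesis
      using that block_min_eq[OF assms] partition_onD1[OF P] by auto
  qed
  moreover have "\<forall>p\<in>P. p \<noteq> {}" using partition_onD3[OF P] by blast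
  ultimately show ?thesis
    using partition_onD1[OF P] by (auto simp: image_iff)
qed

lemma card_partitions_le_card_rep_maps:
  assumes "finite A"
  shows "card {P. partition_on A P} \<le> card (rep_maps A)"
proof (rule card_inj_on_le)
  show "inj_on (\<lambda>P. restrict (block_min P) A) {P. partition_on A P}"
  proof (rule inj_onI)
    fix P Q assume "P \<in> {P. partition_on A P}" "Q \<in> {P. partition_on A P}"
      and eq: "restrict (block_min P) A = restrict (block_min Q) A"
    then have same: "\<forall>x\<in>A. block_min P x = block_min Q x" by (metis restrict_apply')
    have "P = (\<lambda>x. {y\<in>A. block_min P y = block_min P x}) ` A"
      using partition_eq_fibres_block_min \<open>P \<in> _\<close> assms by blast
    also have "\<dots> = (\<lambda>x. {y\<in>A. block_min Q y = block_min Q x}) ` A"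
      using same by (intro image_cong) auto
    also have "\<dots> = Q"
      using partition_eq_fibres_block_min \<open>Q \<in> _\<close> assms by blast
    finally show "P = Q" .
  qed
qed (use restrict_block_min_in_rep_maps assms finite_rep_maps in auto)

lemma bell_le_card_rep_maps: "bell n \<le> card (rep_maps {1..n})"
  unfolding bell_def by (rule card_partitions_le_card_rep_maps) simp

lemma card_rep_maps_insert_le:
  assumes "finite A" "\<forall>y\<in>A. y < a"
  shows "card (rep_maps (insert a A)) \<le> (\<Sum>g\<in>rep_maps A. card (reps A g) + 1)"
proof -
  define decompose where "decompose g = (restrict g A, g a)" for g :: "'a \<Rightarrow> 'a"
  define S where "S = Sigma (rep_maps A) (\<lambda>g. insert a (reps A g))"
  have "inj_on decompose (rep_maps (insert a A))"
  proof (rule inj_onI)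
    fix g h assume g: "g \<in> rep_maps (insert a A)" and h: "h \<in> rep_maps (insert a A)"
      and "decompose g = decompose h"
    then have "\<forall>x\<in>insert a A. g x = h x" by (auto simp: decompose_def) (metis restrict_apply')
    then show "g = h" using g h by (auto simp: rep_maps_def intro: extensionalityI)
  qed
  moreover have "decompose ` rep_maps (insert a A) \<subseteq> S"
  proof (rule image_subsetI)
    fix g assume g: "g \<in> rep_maps (insert a A)"
    then have rm: "rep_map (insert a A) g" by (simp add: rep_maps_def)
    have "restrict g A \<in> rep_maps A"
      using rep_map_mono[OF rm assms(2)] by (auto simp: rep_maps_def rep_map_def)
    moreover have "g a \<in> insert a (reps A (restrict g A))"
      using rm by (auto simp: rep_map_def reps_def)
    ultimately show "decompose g \<in> S" by (simp add: S_def decompose_def)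
  qed
  moreover have "finite S"
    using assms(1) by (simp add: S_def finite_rep_maps reps_def)
  ultimately have "card (rep_maps (insert a A)) \<le> card S"
    by (rule card_inj_on_le)
  also have "card S = (\<Sum>g\<in>rep_maps A. card (insert a (reps A g)))"
    using assms(1) by (simp add: S_def card_SigmaI finite_rep_maps reps_def)
  also have "\<dots> \<le> (\<Sum>g\<in>rep_maps A. card (reps A g) + 1)"
    by (intro sum_mono) (simp add: card_insert_le_m1 card_insert_if assms(1) reps_def)
  finally show ?thesis .
qed

lemma card_rep_maps_ge:
  assumes "finite A" "B \<subseteq> A" "\<forall>x\<in>B. \<forall>y\<in>A - B. x \<le> y"
  shows "card B ^ card (A - B) \<le> card (rep_maps A)"
proof -
  define extend where "extend f = (\<lambda>x. if x \<in> B then x else f x)" for f :: "'a \<Rightarrow> 'a"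
  have "inj_on extend ((A - B) \<rightarrow>\<^sub>E B)"
  proof (rule inj_onI)
    fix f h assume f: "f \<in> (A - B) \<rightarrow>\<^sub>E B" and h: "h \<in> (A - B) \<rightarrow>\<^sub>E B"
      and eq: "extend f = extend h"
    show "f = h"
    proof (rule PiE_ext[OF f h])
      fix x assume "x \<in> A - B"
      then show "f x = h x" using fun_cong[OF eq, of x] by (simp add: extend_def)
    qed
  qed
  moreover have "extend ` ((A - B) \<rightarrow>\<^sub>E B) \<subseteq> rep_maps A"
    using assms(2,3) by (fastforce simp: extend_def rep_maps_def rep_map_def PiE_iff extensional_def)
  ultimately have "card ((A - B) \<rightarrow>\<^sub>E B) \<le> card (rep_maps A)"
    using assms(1) by (intro card_inj_on_le) (auto simp: finite_rep_maps)
  then show ?thesis using assms(1) by (simp add: card_PiE)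
qed

lemma card_rep_maps_pos: "finite A \<Longrightarrow> 0 < card (rep_maps A)"
  using card_rep_maps_ge[of A A] by simp

lemma card_rep_maps_many_reps_le:
  assumes "finite A"
  shows "card {g\<in>rep_maps A. k \<le> card (reps A g)} \<le> 2 ^ card A * card A ^ (card A - k)"
proof -
  define SS where "SS = {S. S \<subseteq> A \<and> k \<le> card S}"
  define F where "F S = PiE A (\<lambda>x. if x \<in> S then {x} else A)" for S
  have "{g\<in>rep_maps A. k \<le> card (reps A g)} \<subseteq> (\<Union>S\<in>SS. F S)"
  proof clarify
    fix g assume "g \<in> rep_maps A" "k \<le> card (reps A g)"
    then have "reps A g \<in> SS" "g \<in> F (reps A g)"
      by (auto simp: SS_def F_def reps_def rep_maps_def rep_map_def PiE_iff)
    then show "g \<in> (\<Union>S\<in>SS. F S)" by blast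
  qed
  moreover have "finite SS" using assms by (simp add: SS_def)
  ultimately have "card {g\<in>rep_maps A. k \<le> card (reps A g)} \<le> card (\<Union>S\<in>SS. F S)"
    using assms by (intro card_mono) (auto simp: F_def intro!: finite_PiE)
  also have "\<dots> \<le> (\<Sum>S\<in>SS. card (F S))"
    by (rule card_UN_le[OF \<open>finite SS\<close>])
  also have "\<dots> \<le> (\<Sum>S\<in>SS. card A ^ (card A - k))"
  proof (rule sum_mono)
    fix S assume S: "S \<in> SS"
    have "card (F S) = (\<Prod>x\<in>A. if x \<in> S then 1 else card A)"
      using assms by (auto simp: F_def card_PiE intro!: prod.cong)
    also have "\<dots> = card A ^ card (A - S)"
      using assms by (simp add: prod.If_cases Diff_eq)
    also have "\<dots> \<le> card A ^ (card A - k)"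
    proof (cases "A = {}")
      case False
      have "S \<subseteq> A" "k \<le> card S" using S by (auto simp: SS_def)
      then have "card (A - S) \<le> card A - k"
        using assms by (simp add: card_Diff_subset finite_subset)
      moreover have "1 \<le> card A" using False assms by (simp add: Suc_leI card_gt_0_iff)
      ultimately show ?thesis by (rule power_increasing)
    qed (use S in \<open>simp add: SS_def\<close>)
    finally show "card (F S) \<le> card A ^ (card A - k)" .
  qed
  also have "\<dots> = card SS * card A ^ (card A - k)" by simp
  also have "card SS \<le> 2 ^ card A"
    using card_mono[of "Pow A" SS] assms by (auto simp: SS_def card_Pow)
  finally show ?thesis by simp
qed

definition insert_nth :: "nat \<Rightarrow> 'a \<Rightarrow> 'a list \<Rightarrow> 'a list" where
  "insert_nth p x xs = take p xs @ x # drop p xs"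

lemma length_insert_nth: "p \<le> length xs \<Longrightarrow> length (insert_nth p x xs) = Suc (length xs)"
  by (simp add: insert_nth_def)

lemma set_insert_nth: "set (insert_nth p x xs) = insert x (set xs)"
proof -
  have "set xs = set (take p xs) \<union> set (drop p xs)"
    by (metis append_take_drop_id set_append)
  then show ?thesis by (auto simp: insert_nth_def)
qed

lemma distinct_insert_nth: "distinct xs \<Longrightarrow> x \<notin> set xs \<Longrightarrow> distinct (insert_nth p x xs)"
  by (auto simp: insert_nth_def set_take_disj_set_drop_if_distinct dest: in_set_takeD in_set_dropD)

lemma nth_insert_nth:
  assumes "p \<le> length xs"
  shows "insert_nth p x xs ! k = (if k < p then xs ! k else if k = p then x else xs ! (k - 1))"
  using assms by (cases "k < p") (auto simp: insert_nth_def nth_append nth_Cons')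

lemma insert_nth_inject:
  assumes "x \<notin> set xs" "x \<notin> set ys" "p \<le> length xs" "q \<le> length ys"
    and "insert_nth p x xs = insert_nth q x ys"
  shows "xs = ys \<and> p = q"
proof -
  have remove: "removeAll x (insert_nth p x zs) = zs" if "x \<notin> set zs" for zs p
  proof -
    have "x \<notin> set (take p zs)" "x \<notin> set (drop p zs)"
      using that in_set_takeD in_set_dropD by fastforce+
    then show ?thesis by (simp add: insert_nth_def)
  qed
  have prefix: "takeWhile (\<lambda>y. y \<noteq> x) (insert_nth p x zs) = take p zs" if "x \<notin> set zs" for zs p
  proof -
    have "x \<notin> set (take p zs)" using that in_set_takeD by fastforce
    then show ?thesis unfolding insert_nth_def by (subst takeWhile_append2) auto
  qed
  have "xs = removeAll x (insert_nth p x xs)" using remove[OF assms(1)] by simp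
  also have "\<dots> = removeAll x (insert_nth q x ys)" using assms(5) by (rule arg_cong)
  also have "\<dots> = ys" using remove[OF assms(2)] by simp
  finally have "xs = ys" .
  have "take p xs = takeWhile (\<lambda>y. y \<noteq> x) (insert_nth p x xs)" using prefix[OF assms(1)] by simp
  also have "\<dots> = takeWhile (\<lambda>y. y \<noteq> x) (insert_nth q x ys)" using assms(5) by (rule arg_cong)
  also have "\<dots> = take q ys" using prefix[OF assms(2)] by simp
  finally have "length (take p xs) = length (take q ys)" by simp
  with \<open>xs = ys\<close> assms(3,4) show ?thesis by simp
qed

definition contains_1_23 :: "'a::linorder list \<Rightarrow> bool" where
  "contains_1_23 xs \<longleftrightarrow> (\<exists>a b. a < b \<and> Suc b < length xs \<and> xs ! a < xs ! b \<and> xs ! b < xs ! Suc b)"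

definition lr_min :: "'a::linorder list \<Rightarrow> nat \<Rightarrow> bool" where
  "lr_min xs i \<longleftrightarrow> (\<forall>j<i. xs ! i \<le> xs ! j)"

text \<open>Positions other than \<open>p\<close> shift by at most one, preserving their order, and two
  adjacent positions not straddling \<open>p\<close> stay adjacent.\<close>
lemma contains_1_23_if_insert_nth:
  fixes xs :: "'a::linorder list" and p :: nat and x :: 'a
  defines "ys \<equiv> insert_nth p x xs"
  assumes "p \<le> length xs" "a < b" "Suc b < length ys" "p \<notin> {a, b, Suc b}"
    and "ys ! a < ys ! b" "ys ! b < ys ! Suc b"
  shows "contains_1_23 xs"
proof -
  define del where "del k = (if k < p then k else k - 1)" for k
  have nth: "ys ! k = xs ! del k" if "k \<noteq> p" for k
    using nth_insert_nth[OF assms(2)] that by (simp add: ys_def del_def)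
  have "del a < del b" "del (Suc b) = Suc (del b)" "Suc (del b) < length xs"
    using assms(2-5) length_insert_nth[OF assms(2)] by (auto simp: del_def ys_def)
  moreover have "xs ! del a < xs ! del b" "xs ! del b < xs ! del (Suc b)"
    using assms(6,7) nth[of a] nth[of b] nth[of "Suc b"] assms(5) by simp_all
  ultimately show ?thesis
    unfolding contains_1_23_def by (intro exI[of _ "del a"] exI[of _ "del b"]) simp
qed

lemma not_contains_1_23_4_insert_nth_max:
  fixes xs :: "nat list"
  assumes "\<not> contains_1_23 xs" "p \<le> length xs" "\<forall>y\<in>set xs. y < x"
  shows "\<not> contains_1_23_4 (insert_nth p x xs)"
proof
  define ys where "ys = insert_nth p x xs"
  assume "contains_1_23_4 (insert_nth p x xs)"
  then obtain a b c where pos: "a < b" "Suc b < c" "c < length ys"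
    and val: "ys ! a < ys ! b" "ys ! b < ys ! Suc b" "ys ! Suc b < ys ! c"
    unfolding contains_1_23_4_def ys_def by auto
  have "\<forall>y\<in>set ys. y \<le> x" using assms(3) by (auto simp: ys_def set_insert_nth less_imp_le)
  then have "ys ! c \<le> x" using pos(3) nth_mem by blast
  moreover have "ys ! p = x" using assms(2) by (simp add: ys_def nth_insert_nth)
  ultimately have "p \<notin> {a, b, Suc b}" using val by auto
  moreover have "Suc b < length ys" using pos by simp
  ultimately have "contains_1_23 xs"
    using contains_1_23_if_insert_nth[OF assms(2) pos(1)] val unfolding ys_def by blast
  then show False using assms(1) by contradiction
qed

text \<open>For \<open>p = 0\<close> truncated subtraction turns the last hypothesis into the trivial
  \<open>lr_min xs 0\<close>.\<close>
lemma not_contains_1_23_insert_nth_max: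
  fixes xs :: "'a::linorder list"
  assumes "\<not> contains_1_23 xs" "p \<le> length xs" "\<forall>y\<in>set xs. y < x" "lr_min xs (p - 1)"
  shows "\<not> contains_1_23 (insert_nth p x xs)"
proof
  define ys where "ys = insert_nth p x xs"
  assume "contains_1_23 (insert_nth p x xs)"
  then obtain a b where pos: "a < b" "Suc b < length ys"
    and val: "ys ! a < ys ! b" "ys ! b < ys ! Suc b"
    unfolding contains_1_23_def ys_def by auto
  have "\<forall>y\<in>set ys. y \<le> x" using assms(3) by (auto simp: ys_def set_insert_nth less_imp_le)
  then have "ys ! Suc b \<le> x" using pos(2) nth_mem by blast
  moreover have "ys ! p = x" using assms(2) by (simp add: ys_def nth_insert_nth)
  ultimately have "p \<notin> {a, b}" using val by auto
  show False
  proof (cases "p = Suc b")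
    case True
    then have "xs ! a < xs ! (p - 1)"
      using val(1) pos(1) nth_insert_nth[OF assms(2)] by (simp add: ys_def)
    then show False using assms(4) pos(1) True unfolding lr_min_def by (metis diff_Suc_1 not_le)
  next
    case False
    then have "p \<notin> {a, b, Suc b}" using \<open>p \<notin> {a, b}\<close> by simp
    then have "contains_1_23 xs"
      using contains_1_23_if_insert_nth[OF assms(2) pos(1)] pos(2) val unfolding ys_def by blast
    then show False using assms(1) by contradiction
  qed
qed

lemma lr_min_insert_nth_max:
  fixes xs :: "'a::linorder list"
  assumes "p \<le> length xs" "\<forall>y\<in>set xs. y \<le> x" "i \<noteq> p" "i \<le> length xs"
    and "lr_min xs (if i < p then i else i - 1)"
  shows "lr_min (insert_nth p x xs) i"
  unfolding lr_min_def
proof (intro allI impI)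
  define del where "del k = (if k < p then k else k - 1)" for k
  have nth: "insert_nth p x xs ! k = xs ! del k" if "k \<noteq> p" for k
    using nth_insert_nth[OF assms(1)] that by (simp add: del_def)
  have "del i < length xs" using assms(1,3,4) by (auto simp: del_def)
  then have le_x: "xs ! del i \<le> x" using assms(2) nth_mem by blast
  fix j assume "j < i"
  show "insert_nth p x xs ! i \<le> insert_nth p x xs ! j"
  proof (cases "j = p")
    case True
    then have "insert_nth p x xs ! j = x" using assms(1) by (simp add: nth_insert_nth)
    then show ?thesis using le_x by (simp only: nth[OF assms(3)])
  next
    case False
    have "del j < del i" using \<open>j < i\<close> False assms(3) by (auto simp: del_def)
    moreover have "lr_min xs (del i)" using assms(5) by (simp add: del_def)
    ultimately have "xs ! del i \<le> xs ! del j" unfolding lr_min_def by blast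
    then show ?thesis by (simp only: nth[OF assms(3)] nth[OF False])
  qed
qed

definition slot :: "('a \<Rightarrow> 'a) \<Rightarrow> 'a \<Rightarrow> 'a list \<Rightarrow> nat" where
  "slot g x xs = (if g x = x then 0 else Suc (length (takeWhile (\<lambda>y. y \<noteq> g x) xs)))"

lemma length_takeWhile_neq_less: "c \<in> set xs \<Longrightarrow> length (takeWhile (\<lambda>y. y \<noteq> c) xs) < length xs"
  by (induction xs) auto

lemma nth_length_takeWhile_neq: "c \<in> set xs \<Longrightarrow> xs ! length (takeWhile (\<lambda>y. y \<noteq> c) xs) = c"
  by (induction xs) auto

lemma slot_le_length: "g x \<in> insert x (set xs) \<Longrightarrow> slot g x xs \<le> length xs"
  by (auto simp: slot_def Suc_le_eq length_takeWhile_neq_less)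

lemma eq_of_slot: "g x \<in> insert x (set xs) \<Longrightarrow> g x = (if slot g x xs = 0 then x else xs ! (slot g x xs - 1))"
  by (auto simp: slot_def nth_length_takeWhile_neq)

text \<open>A new element \<open>n + 1\<close> goes to the front if it is the minimum of its block and directly
  behind that minimum otherwise. Block minima thus remain left-to-right minima, which are the only
  places where an ascent may start.\<close>
fun perm_of_rep_map :: "nat \<Rightarrow> (nat \<Rightarrow> nat) \<Rightarrow> nat list" where
  "perm_of_rep_map 0 g = []"
| "perm_of_rep_map (Suc n) g =
    insert_nth (slot g (Suc n) (perm_of_rep_map n g)) (Suc n) (perm_of_rep_map n g)"

lemma rep_map_SucD:
  assumes "rep_map {1..Suc n} g"
  shows "rep_map {1..n} g" "g (Suc n) \<in> insert (Suc n) {1..n}"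
proof -
  have "{1..Suc n} = insert (Suc n) {1..n}" by auto
  then show "rep_map {1..n} g" "g (Suc n) \<in> insert (Suc n) {1..n}"
    using assms rep_map_mono[of "Suc n" "{1..n}" g] by (auto simp: rep_map_def)
qed

lemma perm_of_rep_map_invariant:
  assumes "rep_map {1..n} g"
  shows "distinct (perm_of_rep_map n g) \<and> set (perm_of_rep_map n g) = {1..n}
    \<and> \<not> contains_1_23 (perm_of_rep_map n g)
    \<and> (\<forall>i<n. g (perm_of_rep_map n g ! i) = perm_of_rep_map n g ! i \<longrightarrow> lr_min (perm_of_rep_map n g) i)"
  using assms
proof (induction n)
  case 0
  then show ?case by (simp add: contains_1_23_def)
next
  case (Suc n)
  define xs where "xs = perm_of_rep_map n g"
  define p where "p = slot g (Suc n) xs"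
  have IH: "distinct xs" "set xs = {1..n}" "\<not> contains_1_23 xs"
    "\<And>i. i < n \<Longrightarrow> g (xs ! i) = xs ! i \<Longrightarrow> lr_min xs i"
    using Suc.IH rep_map_SucD(1)[OF Suc.prems] by (auto simp: xs_def)
  have gx: "g (Suc n) \<in> insert (Suc n) (set xs)"
    using rep_map_SucD(2)[OF Suc.prems] IH(2) by simp
  have len: "length xs = n" using IH(1,2) distinct_card by fastforce
  have p: "p \<le> length xs" using slot_le_length[where g = g and x = "Suc n", OF gx] by (simp add: p_def)
  have below: "\<forall>y\<in>set xs. y < Suc n" using IH(2) by auto
  have rep_gx: "g (g (Suc n)) = g (Suc n)"
    using Suc.prems by (auto simp: rep_map_def)
  have "lr_min xs (p - 1)"
  proof (cases "p = 0")
    case False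
    then have "xs ! (p - 1) = g (Suc n)" "p - 1 < n"
      using eq_of_slot[where g = g and x = "Suc n", OF gx] p len by (simp_all add: p_def)
    then show ?thesis using IH(4) rep_gx by simp
  qed (simp add: lr_min_def)
  then have "\<not> contains_1_23 (insert_nth p (Suc n) xs)"
    by (rule not_contains_1_23_insert_nth_max[OF IH(3) p below])
  moreover have "distinct (insert_nth p (Suc n) xs)"
    using distinct_insert_nth[OF IH(1)] IH(2) by simp
  moreover have "set (insert_nth p (Suc n) xs) = {1..Suc n}"
    using IH(2) by (auto simp: set_insert_nth)
  moreover have "lr_min (insert_nth p (Suc n) xs) i"
    if "i < Suc n" "g (insert_nth p (Suc n) xs ! i) = insert_nth p (Suc n) xs ! i" for i
  proof (cases "i = p")
    case True
    then have "g (Suc n) = Suc n" using that nth_insert_nth[OF p] by simp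
    then show ?thesis using True by (simp add: p_def slot_def lr_min_def)
  next
    case False
    define j where "j = (if i < p then i else i - 1)"
    have "j < n" "insert_nth p (Suc n) xs ! i = xs ! j"
      using that(1) False p len nth_insert_nth[OF p] by (auto simp: j_def)
    then have "lr_min xs j" using IH(4) that(2) by simp
    then show ?thesis
      using lr_min_insert_nth_max[OF p _ False] below that(1) len by (simp add: j_def less_imp_le)
  qed
  moreover have "perm_of_rep_map (Suc n) g = insert_nth p (Suc n) xs"
    by (simp add: xs_def p_def)
  ultimately show ?case by simp
qed

lemma length_perm_of_rep_map:
  assumes "rep_map {1..n} g"
  shows "length (perm_of_rep_map n g) = n"
proof -
  have "distinct (perm_of_rep_map n g)" "set (perm_of_rep_map n g) = {1..n}"
    using perm_of_rep_map_invariant[OF assms] by auto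
  then show ?thesis using distinct_card[of "perm_of_rep_map n g"] by simp
qed

lemma perm_of_rep_map_inject:
  assumes "rep_map {1..n} g" "rep_map {1..n} h" "perm_of_rep_map n g = perm_of_rep_map n h"
  shows "\<forall>x\<in>{1..n}. g x = h x"
  using assms
proof (induction n)
  case (Suc n)
  define xs where "xs = perm_of_rep_map n g"
  define ys where "ys = perm_of_rep_map n h"
  have rm: "rep_map {1..n} g" "rep_map {1..n} h"
    using rep_map_SucD(1) Suc.prems(1,2) by blast+
  have sets: "set xs = {1..n}" "set ys = {1..n}"
    using perm_of_rep_map_invariant[OF rm(1)] perm_of_rep_map_invariant[OF rm(2)] by (simp_all add: xs_def ys_def)
  have gx: "g (Suc n) \<in> insert (Suc n) (set xs)" "h (Suc n) \<in> insert (Suc n) (set ys)"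
    using rep_map_SucD(2) Suc.prems(1,2) sets by blast+
  have fresh: "Suc n \<notin> set xs" "Suc n \<notin> set ys" using sets by auto
  have "insert_nth (slot g (Suc n) xs) (Suc n) xs = insert_nth (slot h (Suc n) ys) (Suc n) ys"
    using Suc.prems(3) by (simp add: xs_def ys_def)
  then have same: "xs = ys" "slot g (Suc n) xs = slot h (Suc n) ys"
    using insert_nth_inject[OF fresh slot_le_length[where g = g and x = "Suc n", OF gx(1)]
      slot_le_length[where g = h and x = "Suc n", OF gx(2)]] by blast+
  have "g (Suc n) = (if slot g (Suc n) xs = 0 then Suc n else xs ! (slot g (Suc n) xs - 1))"
    by (rule eq_of_slot[where g = g and x = "Suc n", OF gx(1)])
  also have "\<dots> = (if slot h (Suc n) ys = 0 then Suc n else ys ! (slot h (Suc n) ys - 1))"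
    using same by (simp only:)
  also have "\<dots> = h (Suc n)"
    by (rule eq_of_slot[where g = h and x = "Suc n", OF gx(2), symmetric])
  finally have "g (Suc n) = h (Suc n)" .
  moreover have "\<forall>x\<in>{1..n}. g x = h x"
    using Suc.IH[OF rm] same(1) by (simp add: xs_def ys_def)
  moreover have "{1..Suc n} = insert (Suc n) {1..n}" by auto
  ultimately show ?case by (simp only: ball_simps)
qed simp

lemma alpha_Suc_ge: "Suc n * card (rep_maps {1..n}) \<le> alpha_1_23_4 (Suc n)"
proof -
  define extend where "extend = (\<lambda>(g, p). insert_nth p (Suc n) (perm_of_rep_map n g))"
  have props: "distinct (perm_of_rep_map n g)" "set (perm_of_rep_map n g) = {1..n}"
    "\<not> contains_1_23 (perm_of_rep_map n g)" "length (perm_of_rep_map n g) = n"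
    if "g \<in> rep_maps {1..n}" for g
    using that perm_of_rep_map_invariant length_perm_of_rep_map by (auto simp: rep_maps_def)
  have "inj_on extend (rep_maps {1..n} \<times> {0..n})"
  proof (rule inj_onI, clarify)
    fix g p h q assume g: "g \<in> rep_maps {1..n}" "p \<in> {0..n}" and h: "h \<in> rep_maps {1..n}" "q \<in> {0..n}"
      and "extend (g, p) = extend (h, q)"
    then have "insert_nth p (Suc n) (perm_of_rep_map n g) = insert_nth q (Suc n) (perm_of_rep_map n h)"
      by (simp add: extend_def)
    then have "perm_of_rep_map n g = perm_of_rep_map n h" "p = q"
      using insert_nth_inject[of "Suc n" "perm_of_rep_map n g" "perm_of_rep_map n h" p q]
        props[OF g(1)] props[OF h(1)] g(2) h(2) by auto
    then have "\<forall>x\<in>{1..n}. g x = h x"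
      using perm_of_rep_map_inject g h by (auto simp: rep_maps_def)
    then show "g = h \<and> p = q"
      using g h \<open>p = q\<close> by (auto simp: rep_maps_def intro: extensionalityI)
  qed
  moreover have "extend ` (rep_maps {1..n} \<times> {0..n})
      \<subseteq> {xs \<in> permutations_of_set {1..Suc n}. \<not> contains_1_23_4 xs}"
  proof (rule image_subsetI)
    fix gp assume "gp \<in> rep_maps {1..n} \<times> {0..n}"
    then obtain g p where gp: "gp = (g, p)" and g: "g \<in> rep_maps {1..n}" and "p \<in> {0..n}"
      by blast
    then have "p \<le> length (perm_of_rep_map n g)" using props(4) by simp
    moreover have "\<forall>y\<in>set (perm_of_rep_map n g). y < Suc n" using props(2)[OF g] by auto
    ultimately have "\<not> contains_1_23_4 (extend (g, p))"
      using not_contains_1_23_4_insert_nth_max[OF props(3)[OF g]] by (simp add: extend_def)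
    moreover have "extend (g, p) \<in> permutations_of_set {1..Suc n}"
      using props(1,2)[OF g] distinct_insert_nth[OF props(1)[OF g], of "Suc n" p]
      by (auto simp: extend_def permutations_of_set_def set_insert_nth)
    ultimately show "extend gp \<in> {xs \<in> permutations_of_set {1..Suc n}. \<not> contains_1_23_4 xs}"
      by (simp add: gp)
  qed
  ultimately have "card (rep_maps {1..n} \<times> {0..n}) \<le> alpha_1_23_4 (Suc n)"
    unfolding alpha_1_23_4_def by (intro card_inj_on_le) auto
  then show ?thesis by (simp add: card_cartesian_product mult.commute)
qed

lemma bell_Suc_le:
  "bell (Suc n) \<le> k * card (rep_maps {1..n}) + Suc n * card {g\<in>rep_maps {1..n}. k \<le> card (reps {1..n} g)}"
proof -
  let ?R = "rep_maps {1..n}" and ?r = "\<lambda>g. card (reps {1..n} g)"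
  have "bell (Suc n) \<le> card (rep_maps (insert (Suc n) {1..n}))"
    using bell_le_card_rep_maps[of "Suc n"] by (simp add: atLeastAtMostSuc_conv)
  also have "\<dots> \<le> (\<Sum>g\<in>?R. ?r g + 1)"
    by (rule card_rep_maps_insert_le) auto
  also have "\<dots> \<le> (\<Sum>g\<in>?R. k + (if k \<le> ?r g then Suc n else 0))"
  proof (rule sum_mono)
    fix g
    have "reps {1..n} g \<subseteq> {1..n}" by (auto simp: reps_def)
    then have "?r g \<le> card {1..n}" by (rule card_mono[OF finite_atLeastAtMost])
    then have "?r g \<le> n" by simp
    then show "?r g + 1 \<le> k + (if k \<le> ?r g then Suc n else 0)" by auto
  qed
  also have "\<dots> = k * card ?R + (\<Sum>g\<in>?R. if k \<le> ?r g then Suc n else 0)"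
    by (simp add: sum.distrib)
  also have "(\<Sum>g\<in>?R. if k \<le> ?r g then Suc n else 0) = (\<Sum>g\<in>{g\<in>?R. k \<le> ?r g}. Suc n)"
    by (rule sum.inter_filter[symmetric]) (simp add: finite_rep_maps)
  also have "\<dots> = Suc n * card {g\<in>?R. k \<le> ?r g}" by simp
  finally show ?thesis .
qed

lemma four_pow_mult_pow_le:
  fixes n q s :: nat
  assumes "0 < s" "n \<le> q * s" "2 * q \<le> n" "(4 * s) ^ s \<le> n"
  shows "4 ^ n * n ^ (n - 2 * q) \<le> q ^ (n - q)"
proof -
  have "1 \<le> (4 * s) ^ s" using assms(1) by simp
  then have "1 \<le> n" using assms(4) by linarith
  have "((4 * s) ^ n) ^ s = ((4 * s) ^ s) ^ n" by (metis mult.commute power_mult)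
  also have "\<dots> \<le> n ^ n" using assms(4) by (rule power_mono) simp
  also have "\<dots> \<le> n ^ (q * s)" using assms(2) \<open>1 \<le> n\<close> by (rule power_increasing)
  also have "\<dots> = (n ^ q) ^ s" by (simp add: power_mult)
  finally have big: "(4 * s) ^ n \<le> n ^ q"
    using power_mono_iff[of "(4 * s) ^ n" "n ^ q" s] assms(1) by simp
  have "n - 2 * q + q = n - q" using assms(3) by simp
  then have "4 ^ n * n ^ (n - 2 * q) * n ^ q = 4 ^ n * n ^ (n - q)"
    by (metis power_add mult.assoc)
  also have "\<dots> \<le> 4 ^ n * (q * s) ^ (n - q)"
    using assms(2) by (intro mult_left_mono power_mono) auto
  also have "\<dots> = (4 ^ n * s ^ (n - q)) * q ^ (n - q)"
    by (simp add: power_mult_distrib)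
  also have "\<dots> \<le> (4 * s) ^ n * q ^ (n - q)"
  proof (rule mult_right_mono)
    have "s ^ (n - q) \<le> s ^ n" using assms(1) by (intro power_increasing) auto
    then show "4 ^ n * s ^ (n - q) \<le> (4 * s) ^ n" by (simp add: power_mult_distrib)
  qed simp
  also have "\<dots> \<le> n ^ q * q ^ (n - q)"
    using big by (rule mult_right_mono) simp
  also have "\<dots> = q ^ (n - q) * n ^ q" by (rule mult.commute)
  finally show ?thesis using \<open>1 \<le> n\<close> by (simp add: mult_le_cancel2)
qed

lemma few_rep_maps_with_many_reps:
  assumes "4 \<le> s" "(4 * s) ^ s \<le> n"
  shows "2 ^ n * card {g\<in>rep_maps {1..n}. 2 * (n div s + 1) \<le> card (reps {1..n} g)}
    \<le> card (rep_maps {1..n})"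
proof -
  define q where "q = n div s + 1"
  have "4 * s \<le> (4 * s) ^ s" using assms(1) by (intro self_le_power) auto
  then have "4 \<le> n" using assms by linarith
  have "q * s = n div s * s + s" by (simp add: q_def algebra_simps)
  moreover have "n = n div s * s + n mod s" by simp
  moreover have "n mod s < s" using assms(1) by simp
  ultimately have "n \<le> q * s" by linarith
  moreover have "2 * q \<le> n"
    using \<open>4 \<le> n\<close> div_le_mono2[of 4 s n] assms(1) by (simp add: q_def)
  ultimately have key: "4 ^ n * n ^ (n - 2 * q) \<le> q ^ (n - q)"
    using assms by (intro four_pow_mult_pow_le) auto
  have "2 ^ n * card {g\<in>rep_maps {1..n}. 2 * q \<le> card (reps {1..n} g)} \<le> 2 ^ n * (2 ^ n * n ^ (n - 2 * q))"
    using card_rep_maps_many_reps_le[of "{1..n}" "2 * q"] by simp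
  also have "\<dots> = 4 ^ n * n ^ (n - 2 * q)" by (simp add: power_mult_distrib[symmetric])
  also have "\<dots> \<le> q ^ (n - q)" by (rule key)
  also have "\<dots> = card {1..q} ^ card ({1..n} - {1..q})"
    using \<open>2 * q \<le> n\<close> by (simp add: card_Diff_subset)
  also have "\<dots> \<le> card (rep_maps {1..n})"
    using \<open>2 * q \<le> n\<close> by (intro card_rep_maps_ge) auto
  finally show ?thesis unfolding q_def .
qed

lemma bell_alpha_ratio_le_split:
  fixes n k :: nat
  defines "G \<equiv> card (rep_maps {1..n})"
    and "M \<equiv> card {g\<in>rep_maps {1..n}. k \<le> card (reps {1..n} g)}"
  shows "real (bell (Suc n)) / real (alpha_1_23_4 (Suc n)) \<le> real k / real (Suc n) + real M / real G"
proof -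
  have "0 < G" by (simp add: G_def card_rep_maps_pos)
  have "bell (Suc n) \<le> k * G + Suc n * M" unfolding G_def M_def by (rule bell_Suc_le)
  then have bell: "real (bell (Suc n)) \<le> real k * G + real (Suc n) * M"
    by (metis of_nat_add of_nat_le_iff of_nat_mult)
  have "Suc n * G \<le> alpha_1_23_4 (Suc n)" unfolding G_def by (rule alpha_Suc_ge)
  then have alpha: "real (Suc n) * G \<le> real (alpha_1_23_4 (Suc n))"
    by (metis of_nat_le_iff of_nat_mult)
  have "real (bell (Suc n)) / real (alpha_1_23_4 (Suc n)) \<le> real (bell (Suc n)) / (real (Suc n) * G)"
  proof (rule divide_left_mono)
    have pos: "0 < real (Suc n) * G" using \<open>0 < G\<close> by simp
    then have "0 < real (alpha_1_23_4 (Suc n))" using alpha by linarith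
    then show "0 < real (alpha_1_23_4 (Suc n)) * (real (Suc n) * G)" using pos by (rule mult_pos_pos)
  qed (use alpha in auto)
  also have "\<dots> \<le> (real k * G + real (Suc n) * M) / (real (Suc n) * G)"
    using bell by (intro divide_right_mono) auto
  also have "\<dots> = real k / real (Suc n) + real M / G"
    using \<open>0 < G\<close> by (simp add: field_simps)
  finally show ?thesis .
qed

lemma bell_alpha_ratio_le:
  assumes "4 \<le> s" "(4 * s) ^ s \<le> n"
  shows "real (bell (Suc n)) / real (alpha_1_23_4 (Suc n)) \<le> 2 / real s + 3 / real (Suc n)"
proof -
  define k where "k = 2 * (n div s + 1)"
  define G where "G = card (rep_maps {1..n})"
  define M where "M = card {g\<in>rep_maps {1..n}. k \<le> card (reps {1..n} g)}"
  have "2 ^ n * M \<le> G" unfolding G_def M_def k_def using assms by (rule few_rep_maps_with_many_reps)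
  then have "2 ^ n * real M \<le> G" by (metis of_nat_le_iff of_nat_mult of_nat_numeral of_nat_power)
  then have "real M / G \<le> 1 / 2 ^ n" using card_rep_maps_pos[of "{1..n}"] by (simp add: G_def field_simps)
  also have "\<dots> \<le> 1 / real (Suc n)"
  proof (intro divide_left_mono)
    have "Suc n \<le> 2 ^ n" using less_exp[of n] by (simp only: Suc_le_eq)
    then show "real (Suc n) \<le> 2 ^ n" by (metis of_nat_le_iff of_nat_numeral of_nat_power)
  qed auto
  finally have M: "real M / G \<le> 1 / real (Suc n)" .
  have "real k = 2 * real (n div s) + 2" by (simp add: k_def)
  also have "\<dots> \<le> 2 * (real n / real s) + 2"
    using of_nat_div_le_of_nat[of n s, where 'a = real] by simp
  also have "\<dots> \<le> 2 * (real (Suc n) / real s) + 2"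
    using assms(1) by (intro add_right_mono mult_left_mono divide_right_mono) auto
  finally have "real k / real (Suc n) \<le> (2 * (real (Suc n) / real s) + 2) / real (Suc n)"
    by (intro divide_right_mono) auto
  also have "\<dots> = 2 / real s + 2 / real (Suc n)" by (simp add: field_simps)
  finally show ?thesis
    using bell_alpha_ratio_le_split[of n k] M unfolding G_def M_def by simp
qed

lemma eventually_bell_alpha_ratio_le:
  assumes "4 \<le> s"
  shows "\<forall>\<^sub>F n in sequentially. real (bell n) / real (alpha_1_23_4 n) \<le> 2 / real s + 3 / real n"
proof (rule eventually_sequentiallyI)
  fix n assume "Suc ((4 * s) ^ s) \<le> n"
  then obtain m where "n = Suc m" "(4 * s) ^ s \<le> m" by (metis Suc_le_D Suc_le_mono)
  then show "real (bell n) / real (alpha_1_23_4 n) \<le> 2 / real s + 3 / real n"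
    using bell_alpha_ratio_le[OF assms] by simp
qed

theorem mainTheorem10:
  shows "(\<lambda>n. real (bell n) / real (alpha_1_23_4 n)) \<longlonglongrightarrow> 0"
proof (rule order_tendstoI)
  fix a :: real
  assume "a < 0"
  then show "\<forall>\<^sub>F n in sequentially. a < real (bell n) / real (alpha_1_23_4 n)"
    by (intro always_eventually allI) (simp add: less_le_trans[OF _ divide_nonneg_nonneg])
next
  fix e :: real
  assume "0 < e"
  define s where "s = max 4 (nat \<lceil>4 / e\<rceil> + 1)"
  have "4 \<le> s" by (simp add: s_def)
  have "4 / e < real s" unfolding s_def by linarith
  then have "2 / real s < e / 2" using \<open>0 < e\<close> \<open>4 \<le> s\<close> by (simp add: field_simps)
  have "\<forall>\<^sub>F n in sequentially. 3 / real n < e / 2"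
    using lim_const_over_n[of 3] \<open>0 < e\<close> by (intro order_tendstoD(2)) auto
  moreover have "\<forall>\<^sub>F n in sequentially.
      real (bell n) / real (alpha_1_23_4 n) \<le> 2 / real s + 3 / real n"
    using \<open>4 \<le> s\<close> by (rule eventually_bell_alpha_ratio_le)
  ultimately show "\<forall>\<^sub>F n in sequentially. real (bell n) / real (alpha_1_23_4 n) < e"
    by eventually_elim (use \<open>2 / real s < e / 2\<close> in linarith)
qed

end
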